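(* If $X$ is a regular set star Menger space, then every closed discrete subspace of $X$ has cardinality less than $\mathfrak c$. Hence $e(X)\leq\mathfrak c$.
   Context: For a family $\mathcal U$ of subsets of $X$ and $A\subseteq X$, $st(A,\mathcal U)=\bigcup\{U\in\mathcal U: U\cap A\neq\emptyset\}$. A space $X$ is set star Menger if for every nonempty $A\subseteq X$ and every sequence $(\mathcal U_n:n\in\omega)$ of families of open subsets of $X$ with $\overline A\subseteq\bigcup\mathcal U_n$ for all $n$, there are finite $\mathcal V_n\subseteq\mathcal U_n$ ($n\in\omega$) with $A\subseteq\bigcup_{n}st(\bigcup\mathcal V_n,\mathcal U_n)$. The extent $e(X)$ is the supremum of cardinalities of closed discrete subsets of $X$; $\mathfrak c=2^{\aleph_0}$. *)

theory Defs
  imports "HOL-Analysis.Analysis" "HOL-Library.Equipollence"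
begin

definition st :: "'a set \<Rightarrow> 'a set set \<Rightarrow> 'a set" where
  "st A \<U> = \<Union>{U \<in> \<U>. U \<inter> A \<noteq> {}}"

definition set_star_Menger :: "'a topology \<Rightarrow> bool" where
  "set_star_Menger X \<longleftrightarrow>
     (\<forall>A (\<U> :: nat \<Rightarrow> 'a set set). A \<noteq> {} \<and> A \<subseteq> topspace X \<and>
        (\<forall>n. (\<forall>U\<in>\<U> n. openin X U) \<and> X closure_of A \<subseteq> \<Union>(\<U> n))
      \<longrightarrow> (\<exists>\<V>. (\<forall>n. finite (\<V> n) \<and> \<V> n \<subseteq> \<U> n) \<and>
                 A \<subseteq> (\<Union>n. st (\<Union>(\<V> n)) (\<U> n))))"

end

theory Submission imports Defs begin

text \<open>
  Suppose a closed discrete set \<open>D\<close> has size at least continuum, and index points \<open>d\<^sub>t \<in> D\<close>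
  injectively by the sets \<open>t \<subseteq> \<nat>\<close>. Each \<open>t\<close> can also be read as a code of a sequence
  \<open>(F\<^sub>n)\<close> of finite sets of indices, and by a Cantor diagonal argument every such sequence
  has a code \<open>t\<close> that lies in no \<open>F\<^sub>n\<close>. Regularity gives open \<open>B\<^sub>t \<ni> d\<^sub>t\<close> whose closure
  meets \<open>D\<close> only in \<open>d\<^sub>t\<close>. Let \<open>W\<^sub>n\<^sub>,\<^sub>t\<close> be \<open>B\<^sub>t\<close> minus the closures of the \<open>B\<^sub>s\<close> with
  \<open>s \<noteq> t\<close> in the \<open>n\<close>-th set coded by \<open>t\<close>. The set star Menger property applied to
  \<open>{d\<^sub>t}\<close> and the covers \<open>{W\<^sub>n\<^sub>,\<^sub>t}\<^sub>t\<close> selects finite index sets \<open>F\<^sub>n\<close>. For a code \<open>t\<close> of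
  \<open>(F\<^sub>n)\<close> avoiding all \<open>F\<^sub>n\<close>, the only cover member containing \<open>d\<^sub>t\<close> is \<open>W\<^sub>n\<^sub>,\<^sub>t\<close>, and it
  is disjoint from every selected set, so \<open>d\<^sub>t\<close> escapes all the stars.
\<close>

lemma lepoll_total: "A \<lesssim> B \<or> B \<lesssim> A"
  using ordLeq_total[OF card_of_Well_order[of A] card_of_Well_order[of B]]
  unfolding lepoll_def card_of_ordLeq[symmetric] .

text \<open>
  The members of the \<open>n\<close>-th set are read off channel \<open>1\<close> of \<open>t\<close> (the first component of
  \<open>prod_encode\<close>) and its length off channel \<open>2\<close>; channel \<open>0\<close> is ignored, which leaves room
  for the diagonalisation.
\<close>
definition decode_finite_sets_seq :: "nat set \<Rightarrow> nat \<Rightarrow> nat set set" where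
  "decode_finite_sets_seq t n =
     (\<lambda>i. {m. prod_encode (1, prod_encode (n, prod_encode (i, m))) \<in> t})
       ` {..<LEAST k. prod_encode (2, prod_encode (n, k)) \<in> t}"

lemma finite_decode_finite_sets_seq [simp]: "finite (decode_finite_sets_seq t n)"
  by (simp add: decode_finite_sets_seq_def)

lemma decode_finite_sets_seq_surj_diagonal:
  assumes "\<And>n. finite (F n)"
  obtains t where "decode_finite_sets_seq t = F" "\<And>n. t \<notin> F n"
proof -
  have "\<forall>n. \<exists>f k. F n = f ` {..<k::nat}"
    using assms by (metis finite_conv_nat_seg_image lessThan_def)
  then obtain f k where F: "\<And>n. F n = f n ` {..<k n :: nat}"
    by metis
  define t where "t =
     {prod_encode (0, prod_encode (n, i)) | n i. prod_encode (0, prod_encode (n, i)) \<notin> f n i} \<union>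
     {prod_encode (1, prod_encode (n, prod_encode (i, m))) | n i m. m \<in> f n i} \<union>
     {prod_encode (2, prod_encode (n, k n)) | n. True}"
  have diagonal: "prod_encode (0, prod_encode (n, i)) \<in> t \<longleftrightarrow>
      prod_encode (0, prod_encode (n, i)) \<notin> f n i" for n i
    by (auto simp: t_def)
  have elements: "{m. prod_encode (1, prod_encode (n, prod_encode (i, m))) \<in> t} = f n i"
    for n i
    by (auto simp: t_def)
  have length: "(LEAST l. prod_encode (2, prod_encode (n, l)) \<in> t) = k n" for n
    by (rule Least_equality) (auto simp: t_def)
  have "decode_finite_sets_seq t n = F n" for n
    unfolding decode_finite_sets_seq_def elements length F ..
  moreover have "t \<notin> F n" for n
    using diagonal by (auto simp: F)
  ultimately show thesis
    using that by blast
qed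

lemma closedin_subset_closed_discrete:
  assumes "closedin X D" "subtopology X D = discrete_topology D" "S \<subseteq> D"
  shows "closedin X S"
proof -
  have "closedin (subtopology X D) S"
    using assms(2,3) by simp
  then show ?thesis
    using assms(1) closedin_closed_subtopology by blast
qed

lemma regular_space_closed_discrete_isolating_nbhd:
  assumes "regular_space X" "closedin X D" "subtopology X D = discrete_topology D" "d \<in> D"
  obtains B where "openin X B" "d \<in> B" "X closure_of B \<inter> D \<subseteq> {d}"
proof -
  have "closedin X (D - {d})"
    using assms(2,3) closedin_subset_closed_discrete by blast
  moreover have "d \<in> topspace X - (D - {d})"
    using assms(2,4) closedin_subset by blast
  ultimately obtain B where "openin X B" "d \<in> B" "disjnt (D - {d}) (X closure_of B)"
    using assms(1) unfolding regular_space by blast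
  then show thesis
    using that by (auto simp: disjnt_iff)
qed

lemma set_star_Menger_closed_indexed:
  fixes W :: "nat \<Rightarrow> 'i \<Rightarrow> 'a set"
  assumes "set_star_Menger X" "closedin X A" "A \<noteq> {}"
    and "\<And>n i. openin X (W n i)" "\<And>n. A \<subseteq> (\<Union>i. W n i)"
  obtains F where "\<And>n. finite (F n)" "A \<subseteq> (\<Union>n. st (\<Union>(W n ` F n)) (range (W n)))"
proof -
  have "X closure_of A = A"
    using assms(2) closure_of_closedin by blast
  then have "A \<noteq> {} \<and> A \<subseteq> topspace X \<and>
      (\<forall>n. (\<forall>U \<in> range (W n). openin X U) \<and> X closure_of A \<subseteq> \<Union>(range (W n)))"
    using assms(3-5) closedin_subset[OF assms(2)] by auto
  then have "\<exists>\<V>. (\<forall>n. finite (\<V> n) \<and> \<V> n \<subseteq> range (W n)) \<and>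
      A \<subseteq> (\<Union>n. st (\<Union>(\<V> n)) (range (W n)))"
    by (rule assms(1)[unfolded set_star_Menger_def, rule_format])
  then obtain \<V> where \<V>: "\<forall>n. finite (\<V> n) \<and> \<V> n \<subseteq> range (W n)"
    and cover: "A \<subseteq> (\<Union>n. st (\<Union>(\<V> n)) (range (W n)))"
    by blast
  have "\<exists>F. finite F \<and> \<V> n = W n ` F" for n
    using finite_subset_image \<V> by meson
  then obtain F where "\<And>n. finite (F n)" "\<And>n. \<V> n = W n ` F n"
    by metis
  then show thesis
    using that[of F] cover by simp
qed

lemma set_star_Menger_excludes_decoded_separation:
  fixes j :: "nat set \<Rightarrow> 'a" and W :: "nat \<Rightarrow> nat set \<Rightarrow> 'a set"
  assumes "set_star_Menger X" "closedin X (range j)"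
    and W_open: "\<And>n t. openin X (W n t)"
    and W_own_point: "\<And>n s t. j s \<in> W n t \<longleftrightarrow> s = t"
    and W_separated: "\<And>n s t. s \<in> decode_finite_sets_seq t n \<Longrightarrow> s \<noteq> t \<Longrightarrow> W n t \<inter> W n s = {}"
  shows False
proof -
  have "range j \<noteq> {}"
    by simp
  moreover have "range j \<subseteq> (\<Union>t. W n t)" for n
    using W_own_point by blast
  ultimately obtain F where F: "\<And>n. finite (F n)"
    and stars: "range j \<subseteq> (\<Union>n. st (\<Union>(W n ` F n)) (range (W n)))"
    by (rule set_star_Menger_closed_indexed[where W = W, OF assms(1,2) _ W_open]) blast
  obtain t where t: "decode_finite_sets_seq t = F" "\<And>n. t \<notin> F n"
    using decode_finite_sets_seq_surj_diagonal F by metis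
  obtain n s s' where s: "j t \<in> W n s" and s': "s' \<in> F n" "W n s \<inter> W n s' \<noteq> {}"
    using stars unfolding st_def by blast
  have "s = t"
    using W_own_point s by blast
  then show False
    using W_separated[of s' t n] s' t by auto
qed

lemma set_star_Menger_not_continuum_lepoll_closed_discrete:
  assumes "regular_space X" "set_star_Menger X"
    and "closedin X D" "subtopology X D = discrete_topology D"
  shows "\<not> (UNIV :: nat set set) \<lesssim> D"
proof
  assume "(UNIV :: nat set set) \<lesssim> D"
  then obtain j :: "nat set \<Rightarrow> 'a" where j: "inj j" "range j \<subseteq> D"
    unfolding lepoll_def by blast
  then have jD: "j t \<in> D" for t
    by blast
  have "\<exists>B. openin X B \<and> d \<in> B \<and> X closure_of B \<inter> D \<subseteq> {d}" if "d \<in> D" for d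
    using regular_space_closed_discrete_isolating_nbhd[OF assms(1,3,4) that] by blast
  then obtain B where B: "\<And>d. d \<in> D \<Longrightarrow> openin X (B d)" "\<And>d. d \<in> D \<Longrightarrow> d \<in> B d"
    "\<And>d. d \<in> D \<Longrightarrow> X closure_of B d \<inter> D \<subseteq> {d}"
    by metis
  define W where "W n t =
    B (j t) - (\<Union>s \<in> decode_finite_sets_seq t n - {t}. X closure_of B (j s))" for n t
  have B_closure: "B (j t) \<subseteq> X closure_of B (j t)" for t
    using B(1)[OF jD] closure_of_subset openin_subset by metis
  show False
  proof (rule set_star_Menger_excludes_decoded_separation[OF assms(2)])
    show "closedin X (range j)"
      using closedin_subset_closed_discrete[OF assms(3,4) j(2)] .
    show "openin X (W n t)" for n t
      unfolding W_def by (intro openin_diff closedin_Union B(1) jD) auto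
    show "W n t \<inter> W n s = {}" if "s \<in> decode_finite_sets_seq t n" "s \<noteq> t" for n s t
      using that B_closure unfolding W_def by blast
    show "j s \<in> W n t \<longleftrightarrow> s = t" for n s t
    proof
      assume "j s \<in> W n t"
      then have "j s \<in> X closure_of B (j t) \<inter> D"
        using B_closure jD unfolding W_def by blast
      then show "s = t"
        using B(3)[OF jD] j(1) by (auto dest: injD)
    next
      assume "s = t"
      have "j t \<notin> X closure_of B (j s')" if "s' \<noteq> t" for s'
        using B(3)[OF jD, of s'] jD[of t] j(1) that by (auto dest: injD)
      then show "j s \<in> W n t"
        using \<open>s = t\<close> B(2)[OF jD] unfolding W_def by blast
    qed
  qed
qed

theorem theorem2p2:
  fixes X :: "'a topology"
  assumes "regular_space X" and "set_star_Menger X"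
  shows "\<forall>D. closedin X D \<and> subtopology X D = discrete_topology D
           \<longrightarrow> D \<prec> (UNIV :: real set)"
proof (intro allI impI)
  fix D
  assume "closedin X D \<and> subtopology X D = discrete_topology D"
  then have "\<not> (UNIV :: nat set set) \<lesssim> D"
    using set_star_Menger_not_continuum_lepoll_closed_discrete assms by blast
  then have "\<not> (UNIV :: real set) \<lesssim> D"
    using nat_sets_eqpoll_reals lepoll_trans1 by blast
  then show "D \<prec> (UNIV :: real set)"
    using lepoll_total eqpoll_imp_lepoll eqpoll_sym unfolding lesspoll_def by blast
qed

end
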